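(* Let $|\psi\rangle,|\phi\rangle\in\mathcal{H}'$ be pure states with $\mathcal{C}(|\phi\rangle)>\mathcal{C}(|\psi\rangle)$. Then the maximum probability of transforming $|\psi\rangle$ into $|\phi\rangle$ using Z$_2$-invariant operations is $$P(|\psi\rangle\to|\phi\rangle)=\frac{\mathcal{C}(|\psi\rangle)}{\mathcal{C}(|\phi\rangle)}.$$
   Context: $\mathcal{H}'$ is a two-dimensional Hilbert space with orthonormal basis $|0\rangle,|1\rangle$; $\pi=|0\rangle\langle0|-|1\rangle\langle1|$. A Z$_2$-invariant operation is a completely positive, trace-nonincreasing linear map $\mathcal{E}$ on operators on $\mathcal{H}'$ with $\mathcal{E}(\pi X\pi)=\pi\mathcal{E}(X)\pi$ for all $X$. The probability of transforming $|\psi\rangle$ into $|\phi\rangle$ is the largest $\lambda$ such that some Z$_2$-invariant operation $\mathcal{E}$ satisfies $\mathcal{E}(|\psi\rangle\langle\psi|)=\lambda|\phi\rangle\langle\phi|$. For a pure state $|\chi\rangle$, $\mathcal{C}(|\chi\rangle)=2\min\{|\langle0|\chi\rangle|^2,|\langle1|\chi\rangle|^2\}$. *)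

theory Defs
  imports Complex_Main "Jordan_Normal_Form.Matrix"
begin

text \<open>Operators on the qubit space H' = C^2 are 2x2 complex matrices (basis |0>,|1>).
  Pure states are unit vectors in C^2.\<close>

definition psd :: "nat \<Rightarrow> complex mat \<Rightarrow> bool" where
  "psd n A \<longleftrightarrow> A \<in> carrier_mat n n \<and>
     (\<forall>v \<in> carrier_vec n.
        (\<Sum>i<n. \<Sum>j<n. cnj (v $ i) * A $$ (i, j) * v $ j) \<in> \<real> \<and>
        0 \<le> Re (\<Sum>i<n. \<Sum>j<n. cnj (v $ i) * A $$ (i, j) * v $ j))"

definition lin_map2 :: "(complex mat \<Rightarrow> complex mat) \<Rightarrow> bool" where
  "lin_map2 E \<longleftrightarrow>
     (\<forall>X \<in> carrier_mat 2 2. E X \<in> carrier_mat 2 2) \<and>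
     (\<forall>X \<in> carrier_mat 2 2. \<forall>Y \<in> carrier_mat 2 2. \<forall>a b.
        E (a \<cdot>\<^sub>m X + b \<cdot>\<^sub>m Y) = a \<cdot>\<^sub>m E X + b \<cdot>\<^sub>m E Y)"

text \<open>id_k \<otimes> E applied to a (2k)x(2k) matrix viewed as a k x k array of 2x2 blocks.\<close>
definition ampl :: "nat \<Rightarrow> (complex mat \<Rightarrow> complex mat) \<Rightarrow> complex mat \<Rightarrow> complex mat" where
  "ampl k E M = mat (2*k) (2*k) (\<lambda>(i, j).
      E (mat 2 2 (\<lambda>(r, s). M $$ (2 * (i div 2) + r, 2 * (j div 2) + s))) $$ (i mod 2, j mod 2))"

definition completely_positive :: "(complex mat \<Rightarrow> complex mat) \<Rightarrow> bool" where
  "completely_positive E \<longleftrightarrow>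
     (\<forall>k. \<forall>M. psd (2*k) M \<longrightarrow> psd (2*k) (ampl k E M))"

definition trace_nonincreasing :: "(complex mat \<Rightarrow> complex mat) \<Rightarrow> bool" where
  "trace_nonincreasing E \<longleftrightarrow> (\<forall>X. psd 2 X \<longrightarrow> Re (E X $$ (0,0) + E X $$ (1,1)) \<le> Re (X $$ (0,0) + X $$ (1,1)))"

definition piZ :: "complex mat" where
  "piZ = mat 2 2 (\<lambda>(i, j). if i = j then (if i = 0 then 1 else -1) else 0)"

definition Z2_invariant_op :: "(complex mat \<Rightarrow> complex mat) \<Rightarrow> bool" where
  "Z2_invariant_op E \<longleftrightarrow> lin_map2 E \<and> completely_positive E \<and> trace_nonincreasing E \<and>
     (\<forall>X \<in> carrier_mat 2 2. E (piZ * X * piZ) = piZ * E X * piZ)"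

definition pure_state :: "complex vec \<Rightarrow> bool" where
  "pure_state v \<longleftrightarrow> v \<in> carrier_vec 2 \<and> (cmod (v $ 0))\<^sup>2 + (cmod (v $ 1))\<^sup>2 = 1"

definition proj :: "complex vec \<Rightarrow> complex mat" where
  "proj v = mat 2 2 (\<lambda>(i, j). v $ i * cnj (v $ j))"

definition transf_set :: "complex vec \<Rightarrow> complex vec \<Rightarrow> real set" where
  "transf_set \<psi> \<phi> = {p. \<exists>E. Z2_invariant_op E \<and> E (proj \<psi>) = complex_of_real p \<cdot>\<^sub>m proj \<phi>}"

definition coh :: "complex vec \<Rightarrow> real" where
  "coh v = 2 * min ((cmod (v $ 0))\<^sup>2) ((cmod (v $ 1))\<^sup>2)"

end

theory Submission
  imports Defs
begin

text \<open>Z2-covariance forces \<open>E\<close> to map \<open>|0\<rangle>\<langle>0|\<close> and \<open>|1\<rangle>\<langle>1|\<close> to diagonal matrices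
  \<open>diag(x0, x1)\<close>, \<open>diag(y0, y1)\<close> and \<open>|0\<rangle>\<langle>1|\<close>, \<open>|1\<rangle>\<langle>0|\<close> to off-diagonal ones, with corner
  entries \<open>u\<close>, \<open>w\<close>. With populations \<open>a, b\<close> of \<open>\<psi>\<close> and \<open>c, d\<close> of \<open>\<phi>\<close>, the equation
  \<open>E(\<psi>\<psi>\<^sup>*) = p \<phi>\<phi>\<^sup>*\<close> gives \<open>a x0 + b y0 = p c\<close>, \<open>a x1 + b y1 = p d\<close> and
  \<open>p\<^sup>2 c d \<le> a b (|u| + |w|)\<^sup>2\<close>. The Choi matrix of \<open>E\<close> is positive semidefinite, so its 2x2
  principal minors give \<open>|u|\<^sup>2 \<le> x0 y1\<close> and \<open>|w|\<^sup>2 \<le> x1 y0\<close>, and trace non-increase gives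
  \<open>x0 + x1 \<le> 1\<close>, \<open>y0 + y1 \<le> 1\<close>. Together these turn the AM-GM inequality for
  \<open>a x0 \<cdot> a x1\<close> and \<open>b y0 \<cdot> b y1\<close> into an equality, which forces \<open>p min(c,d) \<le> min(a,b)\<close>.
  The bound is attained by a single diagonal or antidiagonal Kraus operator rescaling the
  amplitudes of \<open>\<psi>\<close> to those of \<open>\<phi>\<close>.\<close>

lemma sum_lessThan_2: "(\<Sum>i<(2::nat). f i) = f 0 + (f 1 :: 'a::comm_monoid_add)"
  by (simp add: numeral_2_eq_2 lessThan_Suc add.commute)

lemma sum_lessThan_4: "(\<Sum>i<(4::nat). f i) = f 0 + f 1 + f 2 + (f 3 :: 'a::comm_monoid_add)"
  by (simp add: numeral_eq_Suc lessThan_Suc ac_simps)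

lemma sum_lessThan_double:
  "(\<Sum>i<2*(k::nat). f i) = (\<Sum>I<k. \<Sum>t<2. (f (2*I+t) :: 'a::comm_monoid_add))"
  by (induction k) (simp_all add: sum_lessThan_2 ac_simps)

lemma sum_supported_on_two:
  fixes h :: "nat \<Rightarrow> 'a::comm_monoid_add"
  assumes "i < n" "j < n" "i \<noteq> j" "\<And>l. l < n \<Longrightarrow> l \<noteq> i \<Longrightarrow> l \<noteq> j \<Longrightarrow> h l = 0"
  shows "(\<Sum>l<n. h l) = h i + h j"
proof -
  have "(\<Sum>l<n. h l) = (\<Sum>l\<in>{i,j}. h l)"
    by (rule sum.mono_neutral_right) (use assms in auto)
  then show ?thesis using assms by simp
qed

lemma less_2_iff: "(i::nat) < 2 \<longleftrightarrow> i = 0 \<or> i = 1"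
  by auto

lemma mult_cnj_self: "z * cnj z = (complex_of_real (cmod z))^2"
  by (metis complex_norm_square of_real_power)

section \<open>Positive semidefinite matrices\<close>

lemma psd_quadratic_form_pair:
  fixes a b :: complex
  assumes "psd n A" "i < n" "j < n" "i \<noteq> j"
  defines "q \<equiv> cnj a * A$$(i,i) * a + cnj a * A$$(i,j) * b
    + cnj b * A$$(j,i) * a + cnj b * A$$(j,j) * b"
  shows "q \<in> \<real>" "0 \<le> Re q"
proof -
  define v where "v = vec n (\<lambda>k. if k = i then a else if k = j then b else 0)"
  have v: "v \<in> carrier_vec n" "v $ i = a" "v $ j = b"
    and v0: "\<And>k. k < n \<Longrightarrow> k \<noteq> i \<Longrightarrow> k \<noteq> j \<Longrightarrow> v $ k = 0"
    using assms unfolding v_def by auto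
  have row: "(\<Sum>l<n. cnj (v $ k) * A $$ (k, l) * v $ l)
      = cnj (v $ k) * A $$ (k, i) * a + cnj (v $ k) * A $$ (k, j) * b" for k
    by (subst sum_supported_on_two[OF assms(2-4)]) (use v v0 in auto)
  have "(\<Sum>k<n. \<Sum>l<n. cnj (v $ k) * A $$ (k, l) * v $ l) = q"
    unfolding row q_def
    by (subst sum_supported_on_two[OF assms(2-4)]) (use v v0 in \<open>auto simp: ac_simps\<close>)
  then show "q \<in> \<real>" "0 \<le> Re q"
    using assms(1) v(1) unfolding psd_def by blast+
qed

lemma psd_diag_real:
  assumes "psd n A" "i < n"
  shows "A$$(i,i) \<in> \<real>" "0 \<le> Re (A$$(i,i))"
proof -
  define v :: "complex vec" where "v = vec n (\<lambda>k. if k = i then 1 else 0)"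
  have "v \<in> carrier_vec n" by (simp add: v_def)
  then have "(\<Sum>k<n. \<Sum>l<n. cnj (v $ k) * A $$ (k, l) * v $ l) \<in> \<real> \<and>
      0 \<le> Re (\<Sum>k<n. \<Sum>l<n. cnj (v $ k) * A $$ (k, l) * v $ l)"
    using assms(1) unfolding psd_def by blast
  moreover have "(\<Sum>k<n. \<Sum>l<n. cnj (v $ k) * A $$ (k, l) * v $ l) = A$$(i,i)"
    using assms(2)
    by (simp add: v_def if_distrib[of cnj] if_distrib[of "\<lambda>x. x * _"] if_distrib[of "\<lambda>x. _ * x"]
        cong: if_cong)
  ultimately show "A$$(i,i) \<in> \<real>" "0 \<le> Re (A$$(i,i))"
    by simp_all
qed

lemma psd_hermitian:
  assumes "psd n A" "i < n" "j < n" "i \<noteq> j"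
  shows "A$$(j,i) = cnj (A$$(i,j))"
proof -
  note q = psd_quadratic_form_pair(1)[OF assms]
  have "Im (A$$(i,i) + A$$(i,j) + A$$(j,i) + A$$(j,j)) = 0"
    using q[of 1 1] by (simp add: complex_is_Real_iff)
  moreover have "Im (A$$(i,i) + A$$(i,j) * \<i> - \<i> * A$$(j,i) + A$$(j,j)) = 0"
    using q[of 1 \<i>] by (simp add: complex_is_Real_iff algebra_simps)
  moreover have "Im (A$$(i,i)) = 0" "Im (A$$(j,j)) = 0"
    using psd_diag_real(1)[OF assms(1,2)] psd_diag_real(1)[OF assms(1,3)]
    by (simp_all add: complex_is_Real_iff)
  ultimately show ?thesis by (simp add: complex_eq_iff)
qed

lemma nonneg_hermitian_form_imp_det:
  fixes x y :: real and c :: complex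
  assumes form: "\<And>a b. 0 \<le> x * (cmod a)^2 + y * (cmod b)^2 + 2 * Re (cnj a * c * b)"
  shows "(cmod c)^2 \<le> x * y"
proof -
  have cc: "c * cnj c = complex_of_real ((cmod c)^2)"
    by (rule complex_norm_square[symmetric])
  have f: "0 \<le> x * t^2 + y * (cmod c)^2 - 2 * t * (cmod c)^2" for t
  proof -
    have "cnj (complex_of_real t) * c * (- cnj c) = - complex_of_real (t * (cmod c)^2)"
      by (simp add: mult.assoc cc)
    then show ?thesis using form[of "complex_of_real t" "- cnj c"] by (simp only:) simp
  qed
  have g: "0 \<le> x * (cmod c)^2 + y * t^2 - 2 * t * (cmod c)^2" for t
  proof -
    have "cnj (- c) * c * complex_of_real t = - (complex_of_real t * (c * cnj c))"
      by (simp add: algebra_simps)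
    also have "\<dots> = - complex_of_real (t * (cmod c)^2)"
      by (simp add: cc)
    finally have "cnj (- c) * c * complex_of_real t = - complex_of_real (t * (cmod c)^2)" .
    then show ?thesis using form[of "- c" "complex_of_real t"] by (simp only:) simp
  qed
  have "0 \<le> y * (x * y - (cmod c)^2)" using f[of y] by (simp add: algebra_simps power2_eq_square)
  moreover have "0 \<le> x * (x * y - (cmod c)^2)" using g[of x] by (simp add: algebra_simps power2_eq_square)
  ultimately have "0 \<le> (x + y) * (x * y - (cmod c)^2)" by (simp add: distrib_right)
  moreover have "x = 0 \<and> y = 0 \<Longrightarrow> (cmod c)^2 \<le> x * y" using f[of 1] by simp
  moreover have "0 \<le> x" "0 \<le> y" using form[of 1 0] form[of 0 1] by simp_all
  ultimately show ?thesis
    by (cases "x + y = 0") (simp_all add: zero_le_mult_iff)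
qed

lemma psd_offdiag_norm_le:
  assumes "psd n A" "i < n" "j < n" "i \<noteq> j"
  shows "(cmod (A$$(i,j)))^2 \<le> Re (A$$(i,i)) * Re (A$$(j,j))"
proof (rule nonneg_hermitian_form_imp_det)
  fix a b :: complex
  define x y w where "x = Re (A$$(i,i))" and "y = Re (A$$(j,j))" and "w = cnj a * A$$(i,j) * b"
  have diag: "A$$(i,i) = complex_of_real x" "A$$(j,j) = complex_of_real y"
    using psd_diag_real(1)[OF assms(1,2)] psd_diag_real(1)[OF assms(1,3)]
    by (simp_all add: x_def y_def)
  have sq: "cnj z * complex_of_real r * z = complex_of_real (r * (cmod z)^2)" for z r
    using mult_cnj_self[of z] by (simp add: ac_simps)
  have "cnj a * A$$(i,i) * a + cnj a * A$$(i,j) * b + cnj b * A$$(j,i) * a + cnj b * A$$(j,j) * b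
      = complex_of_real (x * (cmod a)^2 + y * (cmod b)^2) + (w + cnj w)"
    unfolding w_def diag sq psd_hermitian[OF assms] by (simp add: ac_simps)
  also have "\<dots> = complex_of_real (x * (cmod a)^2 + y * (cmod b)^2 + 2 * Re w)"
    by (simp only: complex_add_cnj of_real_add)
  finally show "0 \<le> x * (cmod a)^2 + y * (cmod b)^2 + 2 * Re (cnj a * A$$(i,j) * b)"
    using psd_quadratic_form_pair(2)[OF assms, of a b] by (simp only: w_def Re_complex_of_real)
qed

section \<open>Kraus maps\<close>

definition kraus_map :: "(nat \<Rightarrow> nat \<Rightarrow> complex) \<Rightarrow> complex mat \<Rightarrow> complex mat" where
  "kraus_map K X = mat 2 2 (\<lambda>(i,j). \<Sum>r<2. \<Sum>s<2. K i r * X$$(r,s) * cnj (K j s))"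

lemma kraus_map_carrier: "kraus_map K X \<in> carrier_mat 2 2"
  by (simp add: kraus_map_def)

lemma lin_map2_kraus_map: "lin_map2 (kraus_map K)"
  unfolding lin_map2_def
proof (intro conjI ballI allI)
  fix X Y :: "complex mat" and a b
  assume "X \<in> carrier_mat 2 2" "Y \<in> carrier_mat 2 2"
  then show "kraus_map K (a \<cdot>\<^sub>m X + b \<cdot>\<^sub>m Y) = a \<cdot>\<^sub>m kraus_map K X + b \<cdot>\<^sub>m kraus_map K Y"
    by (intro eq_matI) (auto simp: kraus_map_def sum_lessThan_2 algebra_simps)
qed (rule kraus_map_carrier)

text \<open>\<open>w\<close> is \<open>(1 \<otimes> K\<^sup>\<dagger>) v\<close>.\<close>
lemma quadratic_form_ampl_kraus_map:
  fixes v :: "complex vec" and k :: nat and K :: "nat \<Rightarrow> nat \<Rightarrow> complex"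
  defines "w \<equiv> vec (2*k) (\<lambda>i. \<Sum>t<2. cnj (K t (i mod 2)) * v$(2*(i div 2)+t))"
  shows "(\<Sum>i<2*k. \<Sum>j<2*k. cnj (v$i) * ampl k (kraus_map K) M $$ (i,j) * v$j)
       = (\<Sum>i<2*k. \<Sum>j<2*k. cnj (w$i) * M $$ (i,j) * w$j)"
proof -
  let ?A = "ampl k (kraus_map K) M"
  have A: "?A $$ (2*I+t, 2*J+u) = (\<Sum>r<2. \<Sum>s<2. K t r * M$$(2*I+r,2*J+s) * cnj (K u s))"
    if "I < k" "J < k" "t < 2" "u < 2" for I J t u
    using that unfolding ampl_def kraus_map_def by (simp add: sum_lessThan_2)
  have w: "w $ (2*I+r) = (\<Sum>t<2. cnj (K t r) * v$(2*I+t))" if "I < k" "r < 2" for I r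
    using that unfolding w_def by simp
  have "(\<Sum>i<2*k. \<Sum>j<2*k. cnj (v$i) * ?A $$ (i,j) * v$j)
      = (\<Sum>I<k. \<Sum>t<2. \<Sum>J<k. \<Sum>u<2. cnj (v $ (2*I+t)) * ?A $$ (2*I+t, 2*J+u) * v $ (2*J+u))"
    by (simp add: sum_lessThan_double)
  also have "\<dots> = (\<Sum>I<k. \<Sum>J<k. \<Sum>t<2. \<Sum>u<2.
      cnj (v $ (2*I+t)) * (\<Sum>r<2. \<Sum>s<2. K t r * M$$(2*I+r,2*J+s) * cnj (K u s)) * v $ (2*J+u))"
    by (rule sum.cong[OF refl], rule trans[OF sum.swap], (rule sum.cong[OF refl])+)
      (simp add: A sum_lessThan_2)
  also have "\<dots> = (\<Sum>I<k. \<Sum>J<k. \<Sum>r<2. \<Sum>s<2. cnj (w $ (2*I+r)) * M $$ (2*I+r, 2*J+s) * w $ (2*J+s))"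
    by (rule sum.cong[OF refl], rule sum.cong[OF refl]) (simp add: w sum_lessThan_2, simp add: algebra_simps)
  also have "\<dots> = (\<Sum>i<2*k. \<Sum>j<2*k. cnj (w$i) * M $$ (i,j) * w$j)"
    unfolding sum_lessThan_double by (rule sum.cong[OF refl], rule sum.swap)
  finally show ?thesis .
qed

lemma completely_positive_kraus_map: "completely_positive (kraus_map K)"
  unfolding completely_positive_def psd_def
proof (intro allI impI conjI ballI)
  fix k M v
  assume M: "M \<in> carrier_mat (2*k) (2*k) \<and> (\<forall>w \<in> carrier_vec (2*k).
      (\<Sum>i<2*k. \<Sum>j<2*k. cnj (w $ i) * M $$ (i, j) * w $ j) \<in> \<real> \<and>
      0 \<le> Re (\<Sum>i<2*k. \<Sum>j<2*k. cnj (w $ i) * M $$ (i, j) * w $ j))"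
  show "ampl k (kraus_map K) M \<in> carrier_mat (2*k) (2*k)"
    by (simp add: ampl_def)
  show "(\<Sum>i<2*k. \<Sum>j<2*k. cnj (v $ i) * ampl k (kraus_map K) M $$ (i, j) * v $ j) \<in> \<real>"
    "0 \<le> Re (\<Sum>i<2*k. \<Sum>j<2*k. cnj (v $ i) * ampl k (kraus_map K) M $$ (i, j) * v $ j)"
    using M[THEN conjunct2, rule_format, OF vec_carrier] unfolding quadratic_form_ampl_kraus_map
    by blast+
qed

lemma piZ_conj:
  assumes "X \<in> carrier_mat 2 2"
  shows "piZ * X * piZ = mat 2 2 (\<lambda>(i,j). if i = j then X$$(i,j) else - X$$(i,j))"
  by (rule eq_matI) (use assms in \<open>auto simp: piZ_def scalar_prod_def atLeast0LessThan sum_lessThan_2 less_2_iff\<close>)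

text \<open>The Kraus operator \<open>diag d\<close>, composed with the bit flip if \<open>swap\<close>: the 2x2 matrices
  that commute or anticommute with \<open>piZ\<close>.\<close>
definition monomial_kraus :: "bool \<Rightarrow> (nat \<Rightarrow> complex) \<Rightarrow> nat \<Rightarrow> nat \<Rightarrow> complex" where
  "monomial_kraus swap d i r = (if r = (if swap then 1 - i else i) then d i else 0)"

lemma kraus_map_monomial_Z2_covariant:
  assumes "X \<in> carrier_mat 2 2"
  shows "kraus_map (monomial_kraus swap d) (piZ * X * piZ)
    = piZ * kraus_map (monomial_kraus swap d) X * piZ"
  unfolding piZ_conj[OF assms] piZ_conj[OF kraus_map_carrier]
  by (rule eq_matI) (auto simp: kraus_map_def monomial_kraus_def sum_lessThan_2 less_2_iff)

lemma trace_nonincreasing_kraus_monomial: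
  assumes "\<And>i. i < 2 \<Longrightarrow> cmod (d i) \<le> 1"
  shows "trace_nonincreasing (kraus_map (monomial_kraus swap d))"
  unfolding trace_nonincreasing_def
proof (intro allI impI)
  fix X assume X: "psd 2 X"
  define x0 x1 where "x0 = Re (X$$(0,0))" and "x1 = Re (X$$(1,1))"
  have diag: "X$$(0,0) = complex_of_real x0" "X$$(Suc 0, Suc 0) = complex_of_real x1"
    using psd_diag_real(1)[OF X, of 0] psd_diag_real(1)[OF X, of 1]
    by (simp_all add: x0_def x1_def)
  have nonneg: "0 \<le> x0" "0 \<le> x1"
    using psd_diag_real(2)[OF X, of 0] psd_diag_real(2)[OF X, of 1]
    by (simp_all add: x0_def x1_def)
  have contr: "x * (cmod (d i))^2 \<le> x" if "0 \<le> x" "i < 2" for x i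
    using that assms[of i] by (simp add: mult_left_le power_le_one)
  have "Re (kraus_map (monomial_kraus swap d) X $$ (0,0) + kraus_map (monomial_kraus swap d) X $$ (1,1))
      = (if swap then x1 * (cmod (d 0))^2 + x0 * (cmod (d 1))^2
         else x0 * (cmod (d 0))^2 + x1 * (cmod (d 1))^2)"
    by (simp add: kraus_map_def monomial_kraus_def sum_lessThan_2 diag cmod_power2,
        simp add: power2_eq_square algebra_simps)
  also have "\<dots> \<le> x0 + x1"
    using contr[OF nonneg(1), of 0] contr[OF nonneg(1), of 1] contr[OF nonneg(2), of 0]
      contr[OF nonneg(2), of 1] by auto
  finally show "Re (kraus_map (monomial_kraus swap d) X $$ (0,0)
      + kraus_map (monomial_kraus swap d) X $$ (1,1)) \<le> Re (X $$ (0,0) + X $$ (1,1))"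
    by (simp add: x0_def x1_def)
qed

lemma kraus_map_proj:
  assumes "\<And>i. i < 2 \<Longrightarrow> (\<Sum>r<2. K i r * \<psi>$r) = complex_of_real s * \<phi>$i"
  shows "kraus_map K (proj \<psi>) = complex_of_real (s^2) \<cdot>\<^sub>m proj \<phi>"
proof (rule eq_matI)
  fix i j
  assume "i < dim_row (complex_of_real (s^2) \<cdot>\<^sub>m proj \<phi>)"
    and "j < dim_col (complex_of_real (s^2) \<cdot>\<^sub>m proj \<phi>)"
  then have ij: "i < 2" "j < 2" by (auto simp: proj_def)
  then have "kraus_map K (proj \<psi>) $$ (i,j) = (\<Sum>r<2. K i r * \<psi>$r) * cnj (\<Sum>r<2. K j r * \<psi>$r)"
    by (simp add: kraus_map_def proj_def sum_lessThan_2 algebra_simps)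
  also have "\<dots> = (complex_of_real (s^2) \<cdot>\<^sub>m proj \<phi>) $$ (i,j)"
    using ij by (simp add: assms proj_def power2_eq_square)
  finally show "kraus_map K (proj \<psi>) $$ (i,j) = (complex_of_real (s^2) \<cdot>\<^sub>m proj \<phi>) $$ (i,j)" .
qed (auto simp: kraus_map_def proj_def)

lemma monomial_kraus_in_transf_set:
  assumes "\<And>i. i < 2 \<Longrightarrow> cmod (d i) \<le> 1"
    and "\<And>i. i < 2 \<Longrightarrow> d i * \<psi>$(if swap then 1 - i else i) = complex_of_real s * \<phi>$i"
  shows "s^2 \<in> transf_set \<psi> \<phi>"
  unfolding transf_set_def
proof (intro CollectI exI conjI)
  have "trace_nonincreasing (kraus_map (monomial_kraus swap d))"
    using assms(1) by (rule trace_nonincreasing_kraus_monomial)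
  then show "Z2_invariant_op (kraus_map (monomial_kraus swap d))"
    unfolding Z2_invariant_op_def
    using lin_map2_kraus_map completely_positive_kraus_map kraus_map_monomial_Z2_covariant by blast
  have "(\<Sum>r<2. monomial_kraus swap d i r * \<psi>$r) = complex_of_real s * \<phi>$i" if "i < 2" for i
    using assms(2)[OF that] that by (auto simp: monomial_kraus_def sum_lessThan_2 less_2_iff)
  then show "kraus_map (monomial_kraus swap d) (proj \<psi>) = complex_of_real (s^2) \<cdot>\<^sub>m proj \<phi>"
    by (rule kraus_map_proj)
qed

section \<open>Attaining the bound\<close>

lemma scaled_weights_pairing:
  fixes a b c d p :: real
  assumes "a + b = 1" "c + d = 1" "p \<le> 1" "p * min c d = min a b"
  shows "(p * c \<le> a \<and> p * d \<le> b) \<or> (p * d \<le> a \<and> p * c \<le> b)"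
proof -
  have "p * c + p * d = p" using assms(2) by (metis distrib_left mult_1_right)
  then have "p * max c d \<le> max a b"
    using assms by (auto simp: min_def max_def split: if_splits)
  then show ?thesis
    using assms(4) by (auto simp: min_def max_def split: if_splits)
qed

lemma norm_scaled_ratio_le_1:
  assumes "0 \<le> s" "s^2 * (cmod w)^2 \<le> (cmod z)^2"
  shows "cmod (complex_of_real s * w / z) \<le> 1"
proof -
  have "(s * cmod w)^2 \<le> (cmod z)^2" using assms(2) by (simp add: power_mult_distrib)
  then have "s * cmod w \<le> cmod z" by (rule power2_le_imp_le) simp
  then show ?thesis using assms(1) by (simp add: norm_mult norm_divide divide_le_eq_1)
qed

lemma coh_ratio_in_transf_set:
  assumes "pure_state \<psi>" "pure_state \<phi>" "coh \<phi> > coh \<psi>"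
  shows "coh \<psi> / coh \<phi> \<in> transf_set \<psi> \<phi>"
proof -
  define a b c d where "a = (cmod (\<psi>$0))^2" and "b = (cmod (\<psi>$1))^2"
    and "c = (cmod (\<phi>$0))^2" and "d = (cmod (\<phi>$1))^2"
  define p where "p = coh \<psi> / coh \<phi>"
  have sums: "a + b = 1" "c + d = 1"
    using assms(1,2) unfolding pure_state_def a_def b_def c_def d_def by auto
  have coh: "coh \<psi> = 2 * min a b" "coh \<phi> = 2 * min c d"
    by (simp_all add: coh_def a_def b_def c_def d_def)
  have "0 \<le> min a b" "min a b < min c d"
    using assms(3) by (simp_all add: coh a_def b_def)
  moreover have "0 \<le> x / y \<and> x / y \<le> 1 \<and> x / y * y = x" if "0 \<le> x" "x < y" for x y :: real
    using that by simp
  moreover have "p = min a b / min c d"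
    unfolding p_def coh by simp
  ultimately have p: "0 \<le> p" "p \<le> 1" "p * min c d = min a b"
    by blast+
  have \<phi>_nonzero: "\<phi>$i \<noteq> 0" if "i < 2" for i
    using that \<open>min a b < min c d\<close> \<open>0 \<le> min a b\<close> by (auto simp: c_def d_def less_2_iff)
  have "\<exists>swap. \<forall>i<2. p * (cmod (\<phi>$i))^2 \<le> (cmod (\<psi>$(if swap then 1 - i else i)))^2"
  proof (cases "p * c \<le> a \<and> p * d \<le> b")
    case True
    then show ?thesis by (intro exI[of _ False]) (auto simp: less_2_iff a_def b_def c_def d_def)
  next
    case False
    then show ?thesis using scaled_weights_pairing[OF sums p(2,3)]
      by (intro exI[of _ True]) (auto simp: less_2_iff a_def b_def c_def d_def)
  qed
  then obtain swap
    where fit: "\<And>i. i < 2 \<Longrightarrow> p * (cmod (\<phi>$i))^2 \<le> (cmod (\<psi>$(if swap then 1 - i else i)))^2"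
    by blast
  define s where "s = sqrt p"
  define \<sigma> where "\<sigma> i = (if swap then 1 - i else i)" for i :: nat
  have "s^2 \<in> transf_set \<psi> \<phi>"
  proof (rule monomial_kraus_in_transf_set)
    fix i :: nat assume i: "i < 2"
    show "cmod (complex_of_real s * \<phi>$i / \<psi>$\<sigma> i) \<le> 1"
      using fit[OF i] p(1) by (intro norm_scaled_ratio_le_1) (simp_all add: s_def \<sigma>_def)
    have "s = 0" if "\<psi>$\<sigma> i = 0"
    proof -
      have "p * (cmod (\<phi>$i))^2 \<le> 0" using fit[OF i] that by (simp add: \<sigma>_def)
      moreover have "0 < (cmod (\<phi>$i))^2" using \<phi>_nonzero[OF i] by simp
      ultimately show ?thesis using p(1) by (simp add: s_def mult_le_0_iff)
    qed
    then show "complex_of_real s * \<phi>$i / \<psi>$\<sigma> i * \<psi>$(if swap then 1 - i else i)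
      = complex_of_real s * \<phi>$i"
      by (auto simp: \<sigma>_def)
  qed
  then show ?thesis using p(1) by (simp add: s_def p_def)
qed

section \<open>The upper bound\<close>

lemma sum_le_double_geometric_mean_imp_eq:
  fixes P Q K :: real
  assumes "0 \<le> P" "0 \<le> Q" "P + Q \<le> 2 * K" "K^2 \<le> P * Q"
  shows "P = Q"
proof -
  have "(P + Q)^2 \<le> (2 * K)^2" by (rule power_mono) (use assms in auto)
  then have "(P - Q)^2 \<le> 0" using assms(4) by (simp add: power2_eq_square algebra_simps)
  then show ?thesis by simp
qed

lemma mult_eq_mult_imp_le_or_le:
  fixes a0 a1 b0 b1 :: real
  assumes "0 \<le> a0" "0 \<le> a1" "a0 * a1 = b0 * b1"
  shows "b0 \<le> a1 \<or> b1 \<le> a0"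
proof (rule ccontr)
  assume "\<not> ?thesis"
  then have "a1 < b0" "a0 < b1" by auto
  then have "a0 * a1 \<le> b1 * a1" "b1 * a1 < b1 * b0"
    using assms(1,2) by (auto intro: mult_right_mono mult_strict_left_mono)
  then show False using assms(3) by (simp add: mult.commute)
qed

lemma choi_constraints_imp_min_le:
  fixes a b c d x0 x1 y0 y1 U W p :: real
  assumes nonneg: "0 \<le> a" "0 \<le> b" "0 \<le> x0" "0 \<le> x1" "0 \<le> y0" "0 \<le> y1"
      "0 \<le> U" "0 \<le> W" "0 \<le> p"
    and trace: "x0 + x1 \<le> 1" "y0 + y1 \<le> 1"
    and minors: "U^2 \<le> x0 * y1" "W^2 \<le> x1 * y0"
    and diag: "a * x0 + b * y0 = p * c" "a * x1 + b * y1 = p * d"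
    and offdiag: "p^2 * (c * d) \<le> a * b * (U + W)^2"
  shows "p * min c d \<le> min a b"
proof -
  define A0 A1 B0 B1 where "A0 = a * x0" and "A1 = a * x1" and "B0 = b * y0" and "B1 = b * y1"
  have AB: "0 \<le> A0" "0 \<le> A1" "0 \<le> B0" "0 \<le> B1"
    using nonneg by (simp_all add: A0_def A1_def B0_def B1_def)
  have U: "a * b * U^2 \<le> A0 * B1"
    using mult_left_mono[OF minors(1), of "a * b"] nonneg by (simp add: A0_def B1_def ac_simps)
  have W: "a * b * W^2 \<le> A1 * B0"
    using mult_left_mono[OF minors(2), of "a * b"] nonneg by (simp add: A1_def B0_def ac_simps)
  have "(A0 + B0) * (A1 + B1) \<le> a * b * U^2 + a * b * W^2 + 2 * (a * b * U * W)"
    using offdiag diag by (simp add: A0_def A1_def B0_def B1_def power2_eq_square algebra_simps)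
  then have "A0 * A1 + B0 * B1 \<le> 2 * (a * b * U * W)"
    using U W by (simp add: algebra_simps)
  moreover have "(a * b * U * W)^2 \<le> (A0 * A1) * (B0 * B1)"
  proof -
    have "(a * b * U * W)^2 = (a * b * U^2) * (a * b * W^2)"
      by (simp add: power2_eq_square ac_simps)
    also have "\<dots> \<le> (A0 * B1) * (A1 * B0)" by (rule mult_mono[OF U W]) (use AB nonneg in auto)
    finally show ?thesis by (simp add: ac_simps)
  qed
  ultimately have "A0 * A1 = B0 * B1"
    using AB by (intro sum_le_double_geometric_mean_imp_eq) simp_all
  then have "B0 \<le> A1 \<or> B1 \<le> A0" "A0 \<le> B1 \<or> A1 \<le> B0"
    using mult_eq_mult_imp_le_or_le[of A0 A1 B0 B1] mult_eq_mult_imp_le_or_le[of B0 B1 A0 A1] AB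
    by simp_all
  moreover have "A0 + A1 \<le> a" "B0 + B1 \<le> b"
    using mult_left_mono[OF trace(1) nonneg(1)] mult_left_mono[OF trace(2) nonneg(2)]
    by (simp_all add: A0_def A1_def B0_def B1_def algebra_simps)
  moreover have "p * min c d \<le> p * c" "p * min c d \<le> p * d"
    using nonneg(9) by (simp_all add: mult_left_mono)
  ultimately show ?thesis
    using diag AB unfolding A0_def A1_def B0_def B1_def by linarith
qed

definition matrix_unit :: "nat \<Rightarrow> nat \<Rightarrow> complex mat" where
  "matrix_unit I J = mat 2 2 (\<lambda>(r,s). if r = I \<and> s = J then 1 else 0)"

lemma matrix_unit_carrier [simp]: "matrix_unit I J \<in> carrier_mat 2 2"
  by (simp add: matrix_unit_def)

lemma lin_map2_add:
  assumes "lin_map2 E" "X \<in> carrier_mat 2 2" "Y \<in> carrier_mat 2 2"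
  shows "E (X + Y) = E X + E Y"
proof -
  have "E X \<in> carrier_mat 2 2" "E Y \<in> carrier_mat 2 2"
    using assms unfolding lin_map2_def by auto
  have "E (X + Y) = E (1 \<cdot>\<^sub>m X + 1 \<cdot>\<^sub>m Y)"
    using assms(2,3) by (intro arg_cong[where f = E] eq_matI) auto
  also have "\<dots> = 1 \<cdot>\<^sub>m E X + 1 \<cdot>\<^sub>m E Y"
    using assms unfolding lin_map2_def by blast
  also have "\<dots> = E X + E Y"
    using \<open>E X \<in> carrier_mat 2 2\<close> \<open>E Y \<in> carrier_mat 2 2\<close> by (intro eq_matI) auto
  finally show ?thesis .
qed

lemma lin_map2_smult:
  assumes "lin_map2 E" "X \<in> carrier_mat 2 2"
  shows "E (c \<cdot>\<^sub>m X) = c \<cdot>\<^sub>m E X"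
proof -
  have "E X \<in> carrier_mat 2 2"
    using assms unfolding lin_map2_def by auto
  have "E (c \<cdot>\<^sub>m X) = E (c \<cdot>\<^sub>m X + 0 \<cdot>\<^sub>m X)"
    using assms(2) by (intro arg_cong[where f = E] eq_matI) auto
  also have "\<dots> = c \<cdot>\<^sub>m E X + 0 \<cdot>\<^sub>m E X"
    using assms unfolding lin_map2_def by blast
  also have "\<dots> = c \<cdot>\<^sub>m E X"
    using \<open>E X \<in> carrier_mat 2 2\<close> by (intro eq_matI) auto
  finally show ?thesis .
qed

lemma lin_map2_proj:
  assumes "lin_map2 E" "\<psi> \<in> carrier_vec 2"
  shows "E (proj \<psi>)
    = (\<psi>$0 * cnj (\<psi>$0)) \<cdot>\<^sub>m E (matrix_unit 0 0) + (\<psi>$1 * cnj (\<psi>$1)) \<cdot>\<^sub>m E (matrix_unit 1 1)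
      + ((\<psi>$0 * cnj (\<psi>$1)) \<cdot>\<^sub>m E (matrix_unit 0 1) + (\<psi>$1 * cnj (\<psi>$0)) \<cdot>\<^sub>m E (matrix_unit 1 0))"
proof -
  have "proj \<psi>
    = ((\<psi>$0 * cnj (\<psi>$0)) \<cdot>\<^sub>m matrix_unit 0 0 + (\<psi>$1 * cnj (\<psi>$1)) \<cdot>\<^sub>m matrix_unit 1 1)
      + ((\<psi>$0 * cnj (\<psi>$1)) \<cdot>\<^sub>m matrix_unit 0 1 + (\<psi>$1 * cnj (\<psi>$0)) \<cdot>\<^sub>m matrix_unit 1 0)"
    by (rule eq_matI) (auto simp: proj_def matrix_unit_def less_2_iff)
  then show ?thesis
    using assms(1) by (simp add: lin_map2_add lin_map2_smult)
qed

lemma piZ_conj_matrix_unit: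
  assumes "I < 2" "J < 2"
  shows "piZ * matrix_unit I J * piZ = (if I = J then 1 else -1) \<cdot>\<^sub>m matrix_unit I J"
  unfolding piZ_conj[OF matrix_unit_carrier]
  by (rule eq_matI) (use assms in \<open>auto simp: matrix_unit_def less_2_iff\<close>)

lemma Z2_covariant_matrix_unit_entry:
  assumes lin: "lin_map2 E" and cov: "\<forall>X \<in> carrier_mat 2 2. E (piZ * X * piZ) = piZ * E X * piZ"
    and "I < 2" "J < 2" "i < 2" "j < 2" "(I = J) \<noteq> (i = j)"
  shows "E (matrix_unit I J) $$ (i,j) = 0"
proof -
  have car: "E (matrix_unit I J) \<in> carrier_mat 2 2" using lin unfolding lin_map2_def by simp
  have "piZ * E (matrix_unit I J) * piZ = E (piZ * matrix_unit I J * piZ)"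
    using cov by simp
  also have "\<dots> = (if I = J then 1 else -1) \<cdot>\<^sub>m E (matrix_unit I J)"
    unfolding piZ_conj_matrix_unit[OF assms(3,4)] by (rule lin_map2_smult[OF lin matrix_unit_carrier])
  finally have "(piZ * E (matrix_unit I J) * piZ) $$ (i,j)
      = ((if I = J then 1 else -1) \<cdot>\<^sub>m E (matrix_unit I J)) $$ (i,j)"
    by simp
  then have "(if i = j then 1 else -1) * E (matrix_unit I J) $$ (i,j)
      = (if I = J then 1 else -1) * E (matrix_unit I J) $$ (i,j)"
    unfolding piZ_conj[OF car] using assms(5,6) car by (auto split: if_splits)
  then show ?thesis using assms(7) by (auto split: if_splits)
qed

text \<open>The projector onto \<open>|00\<rangle> + |11\<rangle>\<close>, where index \<open>2*I + r\<close> of \<open>ampl\<close> stands for \<open>|I\<rangle>|r\<rangle>\<close>;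
  hence \<open>ampl 2 E choi_input\<close> is the Choi matrix of \<open>E\<close>.\<close>
definition choi_input :: "complex mat" where
  "choi_input = mat 4 4 (\<lambda>(i,j). if (i = 0 \<or> i = 3) \<and> (j = 0 \<or> j = 3) then 1 else 0)"

lemma psd_choi_input: "psd 4 choi_input"
  unfolding psd_def
proof (intro conjI ballI)
  fix v :: "complex vec"
  have "(\<Sum>i<4. \<Sum>j<4. cnj (v $ i) * choi_input $$ (i, j) * v $ j) = (v$0 + v$3) * cnj (v$0 + v$3)"
    by (simp add: sum_lessThan_4 choi_input_def algebra_simps)
  then show "(\<Sum>i<4. \<Sum>j<4. cnj (v $ i) * choi_input $$ (i, j) * v $ j) \<in> \<real>"
    "0 \<le> Re (\<Sum>i<4. \<Sum>j<4. cnj (v $ i) * choi_input $$ (i, j) * v $ j)"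
    unfolding mult_cnj_self by simp_all
qed (simp add: choi_input_def)

lemma ampl_choi_input:
  assumes "I < 2" "J < 2" "i < 2" "j < 2"
  shows "ampl 2 E choi_input $$ (2*I+i, 2*J+j) = E (matrix_unit I J) $$ (i,j)"
proof -
  have "mat 2 2 (\<lambda>(r, s). choi_input $$ (2 * I + r, 2 * J + s)) = matrix_unit I J"
    by (rule eq_matI) (use assms in \<open>auto simp: matrix_unit_def choi_input_def less_2_iff\<close>)
  then show ?thesis using assms unfolding ampl_def by simp
qed

lemma psd_choi_matrix:
  assumes "completely_positive E"
  shows "psd 4 (ampl 2 E choi_input)"
  using assms psd_choi_input unfolding completely_positive_def by (metis mult_2 numeral_Bit0)

lemma completely_positive_matrix_unit_diag:
  assumes "completely_positive E" "I < 2" "i < 2"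
  shows "E (matrix_unit I I) $$ (i,i) \<in> \<real>" "0 \<le> Re (E (matrix_unit I I) $$ (i,i))"
  using psd_diag_real[OF psd_choi_matrix[OF assms(1)], of "2*I+i"] assms(2,3)
  by (simp_all add: ampl_choi_input)

lemma completely_positive_matrix_unit_offdiag:
  assumes "completely_positive E" "I < 2" "J < 2" "i < 2" "j < 2" "2*I+i \<noteq> 2*J+j"
  shows "(cmod (E (matrix_unit I J) $$ (i,j)))^2
    \<le> Re (E (matrix_unit I I) $$ (i,i)) * Re (E (matrix_unit J J) $$ (j,j))"
  using psd_offdiag_norm_le[OF psd_choi_matrix[OF assms(1)], of "2*I+i" "2*J+j"] assms(2-6)
  by (simp add: ampl_choi_input)

lemma trace_nonincreasing_matrix_unit:
  assumes "trace_nonincreasing E" "I < 2"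
  shows "Re (E (matrix_unit I I) $$ (0,0) + E (matrix_unit I I) $$ (1,1)) \<le> 1"
proof -
  have "psd 2 (matrix_unit I I)"
    unfolding psd_def
  proof (intro conjI ballI)
    fix v :: "complex vec"
    have "(\<Sum>i<2. \<Sum>j<2. cnj (v $ i) * matrix_unit I I $$ (i, j) * v $ j) = v$I * cnj (v$I)"
      using assms(2) by (auto simp: sum_lessThan_2 matrix_unit_def less_2_iff)
    then show "(\<Sum>i<2. \<Sum>j<2. cnj (v $ i) * matrix_unit I I $$ (i, j) * v $ j) \<in> \<real>"
      "0 \<le> Re (\<Sum>i<2. \<Sum>j<2. cnj (v $ i) * matrix_unit I I $$ (i, j) * v $ j)"
      unfolding mult_cnj_self by simp_all
  qed simp
  then show ?thesis
    using assms unfolding trace_nonincreasing_def by (auto simp: matrix_unit_def less_2_iff)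
qed

lemma Z2_covariant_proj_entries:
  assumes lin: "lin_map2 E" and cov: "\<forall>X \<in> carrier_mat 2 2. E (piZ * X * piZ) = piZ * E X * piZ"
    and "\<psi> \<in> carrier_vec 2"
  shows "i < 2 \<Longrightarrow> E (proj \<psi>) $$ (i,i)
      = complex_of_real ((cmod (\<psi>$0))^2) * E (matrix_unit 0 0) $$ (i,i)
      + complex_of_real ((cmod (\<psi>$1))^2) * E (matrix_unit 1 1) $$ (i,i)"
    and "E (proj \<psi>) $$ (0,1) = \<psi>$0 * cnj (\<psi>$1) * E (matrix_unit 0 1) $$ (0,1)
      + \<psi>$1 * cnj (\<psi>$0) * E (matrix_unit 1 0) $$ (0,1)"
proof -
  have dim: "dim_row (E (matrix_unit I J)) = 2" "dim_col (E (matrix_unit I J)) = 2" for I J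
    using lin unfolding lin_map2_def by auto
  have zero: "E (matrix_unit I J) $$ (i,j) = 0"
    if "I < 2" "J < 2" "i < 2" "j < 2" "(I = J) \<noteq> (i = j)" for I J i j
    using Z2_covariant_matrix_unit_entry[OF lin cov that] .
  show "E (proj \<psi>) $$ (i,i)
      = complex_of_real ((cmod (\<psi>$0))^2) * E (matrix_unit 0 0) $$ (i,i)
      + complex_of_real ((cmod (\<psi>$1))^2) * E (matrix_unit 1 1) $$ (i,i)" if "i < 2"
    using that unfolding lin_map2_proj[OF lin assms(3)]
    by (simp add: dim zero mult_cnj_self)
  show "E (proj \<psi>) $$ (0,1) = \<psi>$0 * cnj (\<psi>$1) * E (matrix_unit 0 1) $$ (0,1)
      + \<psi>$1 * cnj (\<psi>$0) * E (matrix_unit 1 0) $$ (0,1)"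
    unfolding lin_map2_proj[OF lin assms(3)] by (simp add: dim zero)
qed

lemma Z2_invariant_op_output_bound:
  assumes E: "Z2_invariant_op E" and "pure_state \<psi>" "pure_state \<phi>" "0 \<le> p"
    and out: "E (proj \<psi>) = complex_of_real p \<cdot>\<^sub>m proj \<phi>"
  shows "p * min ((cmod (\<phi>$0))^2) ((cmod (\<phi>$1))^2) \<le> min ((cmod (\<psi>$0))^2) ((cmod (\<psi>$1))^2)"
proof -
  have lin: "lin_map2 E" and cp: "completely_positive E" and tn: "trace_nonincreasing E"
    and cov: "\<forall>X \<in> carrier_mat 2 2. E (piZ * X * piZ) = piZ * E X * piZ"
    using E unfolding Z2_invariant_op_def by auto
  have "\<psi> \<in> carrier_vec 2" using assms(2) unfolding pure_state_def by simp
  note image = Z2_covariant_proj_entries[OF lin cov this, unfolded out]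
  define x0 x1 y0 y1
    where "x0 = Re (E (matrix_unit 0 0) $$ (0,0))" and "x1 = Re (E (matrix_unit 0 0) $$ (1,1))"
    and "y0 = Re (E (matrix_unit 1 1) $$ (0,0))" and "y1 = Re (E (matrix_unit 1 1) $$ (1,1))"
  define U W
    where "U = cmod (E (matrix_unit 0 1) $$ (0,1))" and "W = cmod (E (matrix_unit 1 0) $$ (0,1))"
  define a b c d where "a = (cmod (\<psi>$0))^2" and "b = (cmod (\<psi>$1))^2"
    and "c = (cmod (\<phi>$0))^2" and "d = (cmod (\<phi>$1))^2"
  have real: "E (matrix_unit 0 0) $$ (0,0) = complex_of_real x0"
    "E (matrix_unit 0 0) $$ (1,1) = complex_of_real x1"
    "E (matrix_unit 1 1) $$ (0,0) = complex_of_real y0" "E (matrix_unit 1 1) $$ (1,1) = complex_of_real y1"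
    using completely_positive_matrix_unit_diag(1)[OF cp] by (simp_all add: x0_def x1_def y0_def y1_def)
  have nonneg: "0 \<le> x0" "0 \<le> x1" "0 \<le> y0" "0 \<le> y1" "0 \<le> U" "0 \<le> W"
    using completely_positive_matrix_unit_diag(2)[OF cp]
    by (simp_all add: x0_def x1_def y0_def y1_def U_def W_def)
  have minors: "U^2 \<le> x0 * y1" "W^2 \<le> x1 * y0"
    using completely_positive_matrix_unit_offdiag[OF cp, of 0 1 0 1]
      completely_positive_matrix_unit_offdiag[OF cp, of 1 0 0 1]
    by (simp_all add: x0_def x1_def y0_def y1_def U_def W_def mult.commute)
  have trace: "x0 + x1 \<le> 1" "y0 + y1 \<le> 1"
    using trace_nonincreasing_matrix_unit[OF tn, of 0] trace_nonincreasing_matrix_unit[OF tn, of 1]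
    by (simp_all add: x0_def x1_def y0_def y1_def)
  have diag: "a * x0 + b * y0 = p * c" "a * x1 + b * y1 = p * d"
    using image(1)[of 0, unfolded real] image(1)[of 1, unfolded real]
    by (simp_all add: proj_def mult_cnj_self a_def b_def c_def d_def
        flip: of_real_power of_real_mult of_real_add)
  have "p * (cmod (\<phi>$0) * cmod (\<phi>$1))
      = cmod (\<psi>$0 * cnj (\<psi>$1) * E (matrix_unit 0 1) $$ (0,1)
          + \<psi>$1 * cnj (\<psi>$0) * E (matrix_unit 1 0) $$ (0,1))"
    using image(2)[symmetric] assms(4) by (simp add: proj_def norm_mult)
  also have "\<dots> \<le> cmod (\<psi>$0) * cmod (\<psi>$1) * (U + W)"
    by (rule order_trans[OF norm_triangle_ineq]) (simp add: U_def W_def norm_mult algebra_simps)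
  finally have "(p * (cmod (\<phi>$0) * cmod (\<phi>$1)))^2
      \<le> (cmod (\<psi>$0) * cmod (\<psi>$1) * (U + W))^2"
    by (rule power_mono) (use assms(4) in simp)
  then have offdiag: "p^2 * (c * d) \<le> a * b * (U + W)^2"
    by (simp add: a_def b_def c_def d_def power_mult_distrib)
  show ?thesis
    using choi_constraints_imp_min_le[OF _ _ nonneg assms(4) trace minors diag offdiag]
    by (simp add: a_def b_def c_def d_def)
qed

theorem theorem14:
  fixes \<psi> \<phi> :: "complex vec"
  assumes "pure_state \<psi>" and "pure_state \<phi>"
    and "coh \<phi> > coh \<psi>"
  shows "coh \<psi> / coh \<phi> \<in> transf_set \<psi> \<phi> \<and> (\<forall>p \<in> transf_set \<psi> \<phi>. p \<le> coh \<psi> / coh \<phi>)"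
proof
  show "coh \<psi> / coh \<phi> \<in> transf_set \<psi> \<phi>"
    using assms by (rule coh_ratio_in_transf_set)
  have "0 \<le> coh \<psi>" by (simp add: coh_def)
  with assms(3) have "0 < coh \<phi>" by simp
  show "\<forall>p \<in> transf_set \<psi> \<phi>. p \<le> coh \<psi> / coh \<phi>"
  proof
    fix p assume "p \<in> transf_set \<psi> \<phi>"
    then obtain E where E: "Z2_invariant_op E" "E (proj \<psi>) = complex_of_real p \<cdot>\<^sub>m proj \<phi>"
      unfolding transf_set_def by blast
    show "p \<le> coh \<psi> / coh \<phi>"
    proof (cases "0 \<le> p")
      case True
      then have "p * coh \<phi> \<le> coh \<psi>"
        using Z2_invariant_op_output_bound E assms(1,2) unfolding coh_def by fastforce
      then show ?thesis using \<open>0 < coh \<phi>\<close> by (simp add: pos_le_divide_eq)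
    next
      case False
      then show ?thesis using divide_nonneg_pos[OF \<open>0 \<le> coh \<psi>\<close> \<open>0 < coh \<phi>\<close>] by simp
    qed
  qed
qed

end
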